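(* For every odd $m\ge3$, the suffix array of $\bar{\mathsf{F}}_m$ is an arithmetically progressed permutation with ratio $f_{m-2}$ (and first entry $f_m$).
   Context: Fibonacci words: $\mathsf{F}_1=\mathtt{b}$, $\mathsf{F}_2=\mathtt{a}$, $\mathsf{F}_m=\mathsf{F}_{m-1}\mathsf{F}_{m-2}$ for $m\ge3$; $f_m=|\mathsf{F}_m|$. $\bar{\mathsf{F}}_m$ is $\mathsf{F}_m$ with every $\mathtt{a}$ replaced by $\mathtt{b}$ and every $\mathtt{b}$ by $\mathtt{a}$. Order $\mathtt{a}<\mathtt{b}$; lexicographic order with a proper prefix smaller than the longer string; suffix array $\mathsf{SA}_{\mathsf{T}}$: permutation of $[1..n]$ such that $\mathsf{T}[\mathsf{SA}_{\mathsf{T}}[i]..n]$ is the $i$-th smallest suffix. $x\bmod n$: representative in $[1..n]$. An arithmetically progressed permutation of length $n$ with ratio $k\in[1..n-1]$ is a permutation $P$ of $[1..n]$ with $P[i+1]=P[i]+k\bmod n$. *)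

theory Defs
  imports Main
begin

datatype letter = letA | letB

definition letter_less :: "(letter \<times> letter) set" where
  "letter_less = {(letA, letB)}"

text \<open>Lexicographic order on words; a proper prefix is smaller (List.lexord).\<close>
definition word_less :: "letter list \<Rightarrow> letter list \<Rightarrow> bool" where
  "word_less u v \<longleftrightarrow> (u, v) \<in> lexord letter_less"

fun fibword :: "nat \<Rightarrow> letter list" where
  "fibword 0 = []"
| "fibword (Suc 0) = [letB]"
| "fibword (Suc (Suc 0)) = [letA]"
| "fibword (Suc (Suc (Suc n))) = fibword (Suc (Suc n)) @ fibword (Suc n)"

definition fiblen :: "nat \<Rightarrow> nat" where
  "fiblen m = length (fibword m)"

fun swap_letter :: "letter \<Rightarrow> letter" where
  "swap_letter letA = letB"
| "swap_letter letB = letA"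

definition fibword_bar :: "nat \<Rightarrow> letter list" where
  "fibword_bar m = map swap_letter (fibword m)"

text \<open>Suffix T[i..n] for 1-based i.\<close>
definition suffix_at :: "letter list \<Rightarrow> nat \<Rightarrow> letter list" where
  "suffix_at T i = drop (i - 1) T"

text \<open>A permutation of [1..n], written as the list [P[1],...,P[n]].\<close>
definition is_perm_1n :: "nat \<Rightarrow> nat list \<Rightarrow> bool" where
  "is_perm_1n n P \<longleftrightarrow> length P = n \<and> distinct P \<and> set P = {1..n}"

definition is_suffix_array :: "letter list \<Rightarrow> nat list \<Rightarrow> bool" where
  "is_suffix_array T P \<longleftrightarrow> is_perm_1n (length T) P \<and>
     (\<forall>i j. i < j \<and> j < length P \<longrightarrow> word_less (suffix_at T (P ! i)) (suffix_at T (P ! j)))"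

definition mod1 :: "nat \<Rightarrow> nat \<Rightarrow> nat" where
  "mod1 x n = (x - 1) mod n + 1"

definition arith_prog_perm :: "nat \<Rightarrow> nat \<Rightarrow> nat list \<Rightarrow> bool" where
  "arith_prog_perm n k P \<longleftrightarrow> is_perm_1n n P \<and> 1 \<le> k \<and> k \<le> n - 1 \<and>
     (\<forall>i. i + 1 < n \<longrightarrow> P ! (i + 1) = mod1 (P ! i + k) n)"

end

(*
  For odd m, write n = f_m and k = f_(m-2). The word bar F_m codes the rotation by k on Z/n:
  its p-th letter is a exactly when the point p k - 1 mod n lies in the arc [n - k, n).
  This comes from the mechanical description of Fibonacci words (F_m has a b at position p
  iff floor ((x k + [m even] - 1) / n) increases from x = p to x = p + 1), which the recursion
  F_m = F_(m-1) F_(m-2) preserves because of Cassini-type identities.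

  Comparing two suffixes of a rotation word letter by letter advances both points by k; equal
  letters put both points on the same side of n - k, where the rotation preserves their order.
  So suffixes are sorted by decreasing point. As k^2 = -1 mod n (Cassini, m odd), the position
  congruent to i k has point -1 - i, hence n, n + k, n + 2k, ... (mod n) lists the suffixes in
  increasing order, and suffix arrays are unique.
*)

theory Submission
  imports Defs "HOL-Number_Theory.Fib"
begin

lemma fiblen_eq_fib: "fiblen m = fib m"
  unfolding fiblen_def by (induction m rule: fibword.induct) (auto simp: numeral_eq_Suc)

lemma fib_cross_product_1_2:
  "int (fib (j + 1)) * int (fib (j + 2)) - int (fib j) * int (fib (j + 3)) = (-1) ^ j"
  using fib_Cassini_int[of j] by (simp add: numeral_eq_Suc algebra_simps power2_eq_square)

lemma fib_cross_product_2_2: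
  "int (fib (j + 2)) ^ 2 - int (fib j) * int (fib (j + 4)) = (-1) ^ j"
  using fib_Cassini_int[of j] by (simp add: numeral_eq_Suc algebra_simps power2_eq_square)

lemma fib_dvd_square_plus_one:
  assumes "odd j"
  shows "fib (j + 2) dvd fib j * fib j + 1"
proof -
  have "int (fib j * fib j + 1) = int (fib (j + 2)) * (2 * int (fib j) - int (fib (j + 1)))"
    using fib_Cassini_int[of j] assms by (simp add: numeral_eq_Suc algebra_simps power2_eq_square)
  then have "int (fib (j + 2)) dvd int (fib j * fib j + 1)"
    by (metis dvd_triv_left)
  then show ?thesis by (simp only: of_nat_dvd_iff)
qed

lemma fib_diff_two_bounds:
  assumes "3 \<le> m"
  shows "1 \<le> fib (m - 2)" "fib (m - 2) < fib m"
proof -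
  have "m = Suc (Suc (m - 2))" using assms by simp
  then have "fib m = fib (Suc (m - 2)) + fib (m - 2)" by (metis fib2)
  moreover have "0 < fib (m - 2)" "0 < fib (Suc (m - 2))" using assms by (simp_all add: fib_neq_0_nat)
  ultimately show "1 \<le> fib (m - 2)" "fib (m - 2) < fib m" by simp_all
qed

lemma div_eq_div_of_cross_diff:
  fixes n n' k k' e e' x :: int
  assumes n: "0 < n" and nn': "n \<le> n'" and cross: "k' * n - k * n' = e - e'"
    and e: "(e = 0 \<and> e' = 1) \<or> (e = 1 \<and> e' = 0)" and x: "1 \<le> x" "x \<le> n'"
  shows "(x * k + e - 1) div n = (x * k' + e' - 1) div n'"
proof -
  define A where "A = x * k + e - 1"
  define B where "B = x * k' + e' - 1"
  define q where "q = A div n"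
  define r where "r = A mod n"
  define s where "s = B - q * n'"
  have r: "0 \<le> r" "r \<le> n - 1" unfolding r_def using n by auto
  have sn: "s * n = r * n' - (A * n' - B * n)"
    unfolding s_def r_def q_def by (simp add: algebra_simps minus_div_mult_eq_mod[symmetric])
  have cross': "k * n' - k' * n = e' - e" using cross by simp
  have D: "A * n' - B * n = x * (e' - e) + (e - 1) * n' - (e' - 1) * n"
    unfolding A_def B_def cross'[symmetric] by (simp add: algebra_simps)
  have rn': "0 \<le> r * n'" "r * n' \<le> n * n' - n'"
    using r nn' n mult_right_mono[of r "n - 1" n'] by (auto simp: algebra_simps)
  have "0 \<le> s * n \<and> s * n < n * n'"
  proof (cases "e = 0")
    case True
    then show ?thesis using e sn D rn' x by auto
  next
    case False
    then have e1: "e = 1" "e' = 0" using e by auto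
    have "n \<le> r * n' + x"
    proof (cases "r = 0")
      case True
      then have "n dvd x * k * n'" using e1 unfolding r_def A_def by auto
      then have "n dvd x * k' * n - x * k * n'" by simp
      moreover have "x * k' * n - x * k * n' = x * (k' * n - k * n')"
        by (simp add: algebra_simps)
      ultimately have "n dvd x" using cross e1 by simp
      then show ?thesis using True x by (simp add: zdvd_imp_le)
    next
      case False
      then have "n' \<le> r * n'" using r nn' n mult_right_mono[of 1 r n'] by auto
      then show ?thesis using nn' x by linarith
    qed
    then show ?thesis using e1 sn D rn' x n by auto
  qed
  then have "0 \<le> s" "s < n'"
    using n by (auto simp: zero_le_mult_iff mult.commute[of s])
  moreover have "B = s + q * n'" unfolding s_def by simp
  ultimately have "B div n' = q" by simp
  then show ?thesis unfolding A_def B_def q_def by simp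
qed

definition fib_floor :: "nat \<Rightarrow> nat \<Rightarrow> int" where
  "fib_floor m x = (int x * int (fib (m - 2)) + of_bool (even m) - 1) div int (fib m)"

lemma of_bool_even_alternates:
  "of_bool (even (j + 2)) - of_bool (even (j + 3)) = ((-1) ^ j :: int)"
  "of_bool (even (j + 2)) = (0::int) \<and> of_bool (even (j + 3)) = (1::int)
    \<or> of_bool (even (j + 2)) = (1::int) \<and> of_bool (even (j + 3)) = (0::int)"
  by (cases "even j"; simp)+

lemma fib_floor_Suc_prefix:
  assumes "1 \<le> x" "x \<le> fib (j + 3)"
  shows "fib_floor (j + 3) x = fib_floor (j + 2) x"
proof -
  have "(int x * int (fib j) + of_bool (even (j + 2)) - 1) div int (fib (j + 2))
      = (int x * int (fib (j + 1)) + of_bool (even (j + 3)) - 1) div int (fib (j + 3))"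
  proof (rule div_eq_div_of_cross_diff)
    show "int (fib (j + 1)) * int (fib (j + 2)) - int (fib j) * int (fib (j + 3))
        = of_bool (even (j + 2)) - of_bool (even (j + 3))"
      using fib_cross_product_1_2[of j] of_bool_even_alternates(1)[of j] by simp
  qed (use assms of_bool_even_alternates(2) in \<open>auto simp: numeral_eq_Suc fib_neq_0_nat\<close>)
  then show ?thesis unfolding fib_floor_def by (simp add: numeral_eq_Suc)
qed

lemma fib_floor_Suc_suffix:
  assumes "1 \<le> x" "x \<le> fib (j + 4)"
  shows "fib_floor (j + 4) (fib (j + 3) + x) = fib_floor (j + 2) x + int (fib (j + 1))"
proof -
  have shift: "int (fib (j + 3) + x) * int (fib (j + 2)) + of_bool (even (j + 4)) - 1
      = (int x * int (fib (j + 2)) + of_bool (even (j + 3)) - 1) + int (fib (j + 1)) * int (fib (j + 4))"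
    using fib_cross_product_1_2[of "j + 1"] of_bool_even_alternates(1)[of "j + 1"]
    by (simp add: algebra_simps numeral_eq_Suc)
  have "(int x * int (fib j) + of_bool (even (j + 2)) - 1) div int (fib (j + 2))
      = (int x * int (fib (j + 2)) + of_bool (even (j + 3)) - 1) div int (fib (j + 4))"
  proof (rule div_eq_div_of_cross_diff)
    show "int (fib (j + 2)) * int (fib (j + 2)) - int (fib j) * int (fib (j + 4))
        = of_bool (even (j + 2)) - of_bool (even (j + 3))"
      using fib_cross_product_2_2[of j] of_bool_even_alternates(1)[of j] by (simp add: power2_eq_square)
  qed (use assms of_bool_even_alternates(2) in \<open>auto simp: numeral_eq_Suc fib_neq_0_nat\<close>)
  then have reduce: "(int x * int (fib (j + 2)) + of_bool (even (j + 3)) - 1) div int (fib (j + 4))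
      = fib_floor (j + 2) x"
    unfolding fib_floor_def by simp
  have "fib_floor (j + 4) (fib (j + 3) + x)
      = (int (fib (j + 3) + x) * int (fib (j + 2)) + of_bool (even (j + 4)) - 1) div int (fib (j + 4))"
    unfolding fib_floor_def by simp
  also have "\<dots> = (int x * int (fib (j + 2)) + of_bool (even (j + 3)) - 1) div int (fib (j + 4))
      + int (fib (j + 1))"
    unfolding shift using fib_neq_0_nat[of "j + 4"] by simp
  finally show ?thesis unfolding reduce .
qed

lemma fibword_nth_fib_floor:
  "i < fib (j + 3) \<Longrightarrow>
    fibword (j + 3) ! i = (if fib_floor (j + 3) (i + 1) < fib_floor (j + 3) (i + 2) then letB else letA)"
proof (induction j arbitrary: i rule: less_induct)
  case (less j)
  consider "j = 0" | "j = 1" | j' where "j = j' + 2"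
    by (metis One_nat_def add_2_eq_Suc' not0_implies_Suc)
  then show ?case
  proof cases
    case 1
    have "fibword 3 = [letA, letB]" "fib 3 = 2" by (simp_all add: numeral_eq_Suc)
    moreover from this 1 less.prems have "i = 0 \<or> i = 1" by auto
    ultimately show ?thesis using 1 by (auto simp: fib_floor_def)
  next
    case 2
    have "fibword 4 = [letA, letB, letA]" "fib 4 = 3" by (simp_all add: numeral_eq_Suc)
    moreover from this 2 less.prems have "i = 0 \<or> i = 1 \<or> i = 2" by auto
    ultimately show ?thesis using 2 by (auto simp: fib_floor_def)
  next
    case 3
    have word: "fibword (j + 3) = fibword (j' + 4) @ fibword (j' + 3)"
      using 3 by (simp add: numeral_eq_Suc)
    have lens: "length (fibword (j' + 4)) = fib (j' + 4)"
      using fiblen_eq_fib[of "j' + 4"] by (simp add: fiblen_def)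
    have fibs: "fib (j + 3) = fib (j' + 4) + fib (j' + 3)" "fib (j' + 3) \<le> fib (j' + 4)"
      using 3 by (simp_all add: numeral_eq_Suc)
    have idx: "j' + 2 + 3 = j + 3" "j' + 2 + 2 = j' + 4" "j' + 1 + 4 = j + 3" "j' + 1 + 3 = j' + 4"
        "j' + 1 + 2 = j' + 3" "j' + 1 + 1 = j' + 2"
      using 3 by simp_all
    show ?thesis
    proof (cases "i < fib (j' + 4)")
      case True
      then have "fibword (j + 3) ! i = fibword (j' + 4) ! i"
        using word lens by (simp add: nth_append)
      moreover have "\<dots> = (if fib_floor (j' + 4) (i + 1) < fib_floor (j' + 4) (i + 2) then letB else letA)"
        using less.IH[of "j' + 1" i] 3 True by (simp add: add.commute)
      moreover have "i + 2 \<le> fib (j + 3)"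
        using True fibs fib_neq_0_nat[of "j' + 3"] by simp
      then have "fib_floor (j + 3) (i + 1) = fib_floor (j' + 4) (i + 1)"
          "fib_floor (j + 3) (i + 2) = fib_floor (j' + 4) (i + 2)"
        using fib_floor_Suc_prefix[of _ "j' + 2", unfolded idx] by simp_all
      ultimately show ?thesis by simp
    next
      case False
      define t where "t = i - fib (j' + 4)"
      have i: "i = fib (j' + 4) + t" and t: "t < fib (j' + 3)"
        using False less.prems fibs unfolding t_def by simp_all
      have "fibword (j + 3) ! i = fibword (j' + 3) ! t"
        using word lens i by (simp add: nth_append)
      moreover have "\<dots> = (if fib_floor (j' + 3) (t + 1) < fib_floor (j' + 3) (t + 2) then letB else letA)"
        using less.IH[of j' t] 3 t by (simp add: add.commute)
      moreover have "t + 2 \<le> fib (j + 3)"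
        using t fibs fib_neq_0_nat[of "j' + 3"] by simp
      then have "fib_floor (j + 3) (i + 1) = fib_floor (j' + 3) (t + 1) + int (fib (j' + 2))"
          "fib_floor (j + 3) (i + 2) = fib_floor (j' + 3) (t + 2) + int (fib (j' + 2))"
        unfolding i add.assoc
        using fib_floor_Suc_suffix[of "t + 1" "j' + 1", unfolded idx]
          fib_floor_Suc_suffix[of "t + 2" "j' + 1", unfolded idx]
        by simp_all
      ultimately show ?thesis by simp
    qed
  qed
qed

lemma div_less_div_add_iff:
  fixes y k n :: int
  assumes "0 \<le> k" "k < n"
  shows "y div n < (y + k) div n \<longleftrightarrow> n \<le> y mod n + k"
proof -
  have "(y + k) div n = y div n + (y mod n + k) div n"
    using div_add1_eq[of y k n] assms by simp
  moreover have "(y mod n + k) div n = of_bool (n \<le> y mod n + k)"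
  proof (cases "n \<le> y mod n + k")
    case True
    have "(y mod n + k - n) div n = 0"
      using True assms pos_mod_bound[of n y] by (intro div_pos_pos_trivial) linarith+
    then show ?thesis
      using True div_add_self2[of n "y mod n + k - n"] assms by simp
  qed (use assms in simp)
  ultimately show ?thesis by simp
qed

definition rotation_point :: "nat \<Rightarrow> nat \<Rightarrow> nat \<Rightarrow> nat" where
  "rotation_point n k p = (p * k - 1) mod n"

definition rotation_word :: "nat \<Rightarrow> nat \<Rightarrow> letter list" where
  "rotation_word n k = map (\<lambda>p. if n - k \<le> rotation_point n k p then letA else letB) [1..<Suc n]"

lemma length_rotation_word [simp]: "length (rotation_word n k) = n"
  by (simp add: rotation_word_def)

lemma nth_rotation_word:
  "i < n \<Longrightarrow> rotation_word n k ! i = (if n - k \<le> rotation_point n k (Suc i) then letA else letB)"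
  by (simp add: rotation_word_def del: upt_Suc)

lemma fibword_bar_eq_rotation_word:
  assumes "odd m" "3 \<le> m"
  shows "fibword_bar m = rotation_word (fib m) (fib (m - 2))"
proof (rule nth_equalityI)
  define n k where "n = fib m" and "k = fib (m - 2)"
  obtain j where m: "m = j + 3" using assms(2) by (metis add.commute le_Suc_ex)
  have k: "1 \<le> k" "k < n"
    unfolding n_def k_def using fib_diff_two_bounds[OF assms(2)] by simp_all
  have len: "length (fibword m) = n" using fiblen_eq_fib[of m] by (simp add: fiblen_def n_def)
  then show "length (fibword_bar m) = length (rotation_word (fib m) (fib (m - 2)))"
    by (simp add: fibword_bar_def n_def)
  fix i assume "i < length (fibword_bar m)"
  then have i: "i < n" using len by (simp add: fibword_bar_def)
  define y where "y = int (Suc i) * int k - 1"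
  have floors: "fib_floor m (i + 1) = y div int n" "fib_floor m (i + 2) = (y + int k) div int n"
    unfolding fib_floor_def y_def n_def k_def using assms(1) by (simp_all add: algebra_simps)
  have "y mod int n = int (rotation_point n k (Suc i))"
    unfolding y_def rotation_point_def using k by (simp add: of_nat_mod of_nat_diff algebra_simps)
  then have "fib_floor m (i + 1) < fib_floor m (i + 2) \<longleftrightarrow> n - k \<le> rotation_point n k (Suc i)"
    unfolding floors using div_less_div_add_iff[of "int k" "int n" y] k by linarith
  then show "fibword_bar m ! i = rotation_word (fib m) (fib (m - 2)) ! i"
    using fibword_nth_fib_floor[of i j] nth_rotation_word[OF i, of k] i len m
    by (simp add: fibword_bar_def n_def k_def)
qed

lemma rotation_point_Suc:
  assumes "1 \<le> p"
  shows "rotation_point n k (Suc p) = (rotation_point n k p + k) mod n"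
proof -
  have "Suc p * k - 1 = (p * k - 1) + k"
    using assms by (cases "k = 0") (auto simp: algebra_simps)
  then show ?thesis unfolding rotation_point_def by (simp add: mod_add_left_eq)
qed

lemma rotation_point_self:
  assumes "1 \<le> k"
  shows "rotation_point n k n = n - 1"
proof (cases "n = 0")
  case False
  have "n * k - 1 = (n - 1) + (k - 1) * n"
    using assms False by (cases k) (auto simp: algebra_simps)
  then have "rotation_point n k n = (n - 1) mod n"
    unfolding rotation_point_def by (simp only: mod_mult_self1)
  then show ?thesis using False by simp
qed (simp add: rotation_point_def)

lemma mod_add_less_mod_add:
  fixes a b k n :: nat
  assumes "b < a" "a < n" "k < n" "n - k \<le> a \<longleftrightarrow> n - k \<le> b"
  shows "(b + k) mod n < (a + k) mod n"
proof (cases "n - k \<le> a")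
  case True
  then have "(x + k) mod n = x + k - n" if "x \<in> {a, b}" for x
    using that assms by (auto simp: le_mod_geq)
  then show ?thesis using True assms by simp
qed (use assms in simp)

lemma rotation_word_suffix_less:
  assumes k: "1 \<le> k" "k < n" and pq: "1 \<le> p" "p \<le> n" "1 \<le> q" "q \<le> n"
    and less: "rotation_point n k q < rotation_point n k p"
  shows "word_less (suffix_at (rotation_word n k) p) (suffix_at (rotation_word n k) q)"
  using pq less
proof (induction "n - p" arbitrary: p q rule: less_induct)
  case less
  let ?w = "rotation_word n k" and ?r = "rotation_point n k"
  have "?r p < n" using k by (simp add: rotation_point_def)
  then have "q \<noteq> n" using less.prems rotation_point_self[OF k(1)] by auto
  then have q: "q < n" using less.prems by simp
  have cons: "drop (x - 1) ?w = ?w ! (x - 1) # drop x ?w" if "1 \<le> x" "x \<le> n" for x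
    using that Cons_nth_drop_Suc[of "x - 1" ?w] by simp
  have letter: "?w ! (x - 1) = (if n - k \<le> ?r x then letA else letB)" if "1 \<le> x" "x \<le> n" for x
    using that nth_rotation_word[of "x - 1" n k] by simp
  show ?case
  proof (cases "n - k \<le> ?r p \<longleftrightarrow> n - k \<le> ?r q")
    case False
    then have "(?w ! (p - 1), ?w ! (q - 1)) \<in> letter_less"
      using letter less.prems by (auto simp: letter_less_def)
    then show ?thesis
      using cons less.prems unfolding word_less_def suffix_at_def by simp
  next
    case same: True
    show ?thesis
    proof (cases "p = n")
      case True
      have "([], drop q ?w) \<in> lexord letter_less"
        using q by (cases "drop q ?w") auto
      then show ?thesis
        using cons letter same less.prems True unfolding word_less_def suffix_at_def by simp
    next
      case False
      have "?r (Suc q) < ?r (Suc p)"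
        using mod_add_less_mod_add[of "?r q" "?r p" n k] same less.prems k
          rotation_point_Suc[of p n k] rotation_point_Suc[of q n k]
        by (simp add: rotation_point_def)
      then have "word_less (suffix_at ?w (Suc p)) (suffix_at ?w (Suc q))"
        using less.hyps[of "Suc p" "Suc q"] False q less.prems by simp
      then show ?thesis
        using cons letter same less.prems unfolding word_less_def suffix_at_def by simp
    qed
  qed
qed

definition arith_prog_list :: "nat \<Rightarrow> nat \<Rightarrow> nat list" where
  "arith_prog_list n k = map (\<lambda>i. mod1 (n + i * k) n) [0..<n]"

lemma length_arith_prog_list [simp]: "length (arith_prog_list n k) = n"
  by (simp add: arith_prog_list_def)

lemma nth_arith_prog_list: "i < n \<Longrightarrow> arith_prog_list n k ! i = mod1 (n + i * k) n"
  by (simp add: arith_prog_list_def)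

lemma arith_prog_list_bounds: "i < n \<Longrightarrow> 1 \<le> arith_prog_list n k ! i \<and> arith_prog_list n k ! i \<le> n"
  by (simp add: nth_arith_prog_list mod1_def Suc_le_eq)

lemma arith_prog_list_Suc:
  assumes "Suc i < n"
  shows "arith_prog_list n k ! Suc i = mod1 (arith_prog_list n k ! i + k) n"
proof -
  have "n + Suc i * k - 1 = (n + i * k - 1) + k" using assms by simp
  then show ?thesis
    using assms by (simp add: nth_arith_prog_list mod1_def mod_add_left_eq)
qed

lemma rotation_point_arith_prog_list:
  assumes k: "1 \<le> k" and dvd: "n dvd k * k + 1" and i: "i < n"
  shows "rotation_point n k (arith_prog_list n k ! i) = n - 1 - i"
proof -
  define x where "x = arith_prog_list n k ! i"
  have "1 \<le> x" using arith_prog_list_bounds[OF i] by (simp add: x_def)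
  then have lhs: "int (rotation_point n k x) = (int x * int k - 1) mod int n"
    using k by (simp add: rotation_point_def of_nat_mod of_nat_diff Suc_le_eq)
  have "int x = (int n + int i * int k - 1) mod int n + 1"
    using i by (simp add: x_def nth_arith_prog_list mod1_def of_nat_mod of_nat_diff)
  then have x: "int x mod int n = int i * int k mod int n"
    by (simp add: mod_add_left_eq)
  have "int n dvd int (k * k + 1)" using dvd by (simp only: of_nat_dvd_iff)
  then have kk: "int k * int k mod int n = - 1 mod int n"
    by (simp add: mod_eq_dvd_iff add.commute)
  have "(int x * int k - 1) mod int n = (int i * (int k * int k) - 1) mod int n"
    by (metis x mod_diff_left_eq mod_mult_left_eq mult.assoc)
  also have "\<dots> = (int i * (- 1) - 1) mod int n"
    by (metis kk mod_diff_left_eq mod_mult_right_eq)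
  also have "\<dots> = ((int i * (- 1) - 1) + int n) mod int n"
    by (simp only: mod_add_self2)
  also have "int i * (- 1) - 1 + int n = int (n - 1 - i)" using i by (simp add: of_nat_diff)
  also have "int (n - 1 - i) mod int n = int (n - 1 - i)"
    using i by (intro mod_pos_pos_trivial) simp_all
  finally show ?thesis using lhs unfolding x_def by simp
qed

lemma arith_prog_list_is_perm:
  assumes k: "1 \<le> k" and dvd: "n dvd k * k + 1"
  shows "is_perm_1n n (arith_prog_list n k)"
proof -
  let ?P = "arith_prog_list n k"
  have "map (rotation_point n k) ?P = map (\<lambda>i. n - 1 - i) [0..<n]"
    by (rule nth_equalityI) (simp_all add: rotation_point_arith_prog_list[OF k dvd])
  moreover have "distinct (map (\<lambda>i. n - 1 - i) [0..<n])"
    by (auto simp: distinct_map inj_on_def)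
  ultimately have "distinct ?P" by (metis distinct_map)
  moreover have "set ?P \<subseteq> {1..n}"
    using arith_prog_list_bounds by (auto simp: in_set_conv_nth)
  ultimately have "set ?P = {1..n}"
    by (intro card_subset_eq) (simp_all add: distinct_card)
  with \<open>distinct ?P\<close> show ?thesis by (simp add: is_perm_1n_def)
qed

lemma arith_prog_list_arith_prog_perm:
  assumes "1 \<le> k" "k < n" "n dvd k * k + 1"
  shows "arith_prog_perm n k (arith_prog_list n k)"
  using assms arith_prog_list_is_perm arith_prog_list_Suc
  by (simp add: arith_prog_perm_def)

lemma rotation_word_suffix_array:
  assumes k: "1 \<le> k" "k < n" and dvd: "n dvd k * k + 1"
  shows "is_suffix_array (rotation_word n k) (arith_prog_list n k)"
  unfolding is_suffix_array_def
proof (intro conjI allI impI)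
  show "is_perm_1n (length (rotation_word n k)) (arith_prog_list n k)"
    using arith_prog_list_is_perm[OF k(1) dvd] by simp
  fix i j assume ij: "i < j \<and> j < length (arith_prog_list n k)"
  then have "n - Suc j < n - Suc i" by simp linarith
  then have "rotation_point n k (arith_prog_list n k ! j) < rotation_point n k (arith_prog_list n k ! i)"
    using rotation_point_arith_prog_list[OF k(1) dvd, of i] rotation_point_arith_prog_list[OF k(1) dvd, of j] ij
    by simp
  then show "word_less (suffix_at (rotation_word n k) (arith_prog_list n k ! i))
      (suffix_at (rotation_word n k) (arith_prog_list n k ! j))"
    using rotation_word_suffix_less[OF k] arith_prog_list_bounds[of i n k] arith_prog_list_bounds[of j n k]
      ij by simp
qed

lemma sorted_wrt_set_unique:
  assumes "asymp R" "sorted_wrt R xs" "sorted_wrt R ys" "set xs = set ys"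
  shows "xs = ys"
  using assms(2-4)
proof (induction xs arbitrary: ys)
  case Nil
  then show ?case by simp
next
  case (Cons x xs)
  then obtain y ys' where ys: "ys = y # ys'" by (cases ys) auto
  have "x = y"
  proof (rule ccontr)
    assume "x \<noteq> y"
    then have "R x y" "R y x" using Cons.prems ys by auto
    then show False using assms(1) by (auto dest: asympD)
  qed
  moreover have "x \<notin> set xs" "y \<notin> set ys'"
    using Cons.prems ys assms(1) by (auto dest: asympD)
  ultimately have "set xs = set ys'"
    using Cons.prems ys by auto
  then show ?case using Cons ys \<open>x = y\<close> by simp
qed

lemma suffix_array_unique:
  assumes "is_suffix_array T P" "is_suffix_array T Q"
  shows "P = Q"
proof (rule sorted_wrt_set_unique)
  let ?R = "\<lambda>i j. word_less (suffix_at T i) (suffix_at T j)"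
  have "asym letter_less" by (auto simp: letter_less_def)
  then show "asymp ?R"
    by (auto simp: word_less_def dest: lexord_asymmetric)
  show "sorted_wrt ?R P" "sorted_wrt ?R Q"
    using assms by (simp_all add: is_suffix_array_def sorted_wrt_iff_nth_less)
  show "set P = set Q"
    using assms by (simp add: is_suffix_array_def is_perm_1n_def)
qed

theorem mainTheorem17:
  fixes m :: nat
  assumes "odd m" and "m \<ge> 3"
  shows "(\<exists>P. is_suffix_array (fibword_bar m) P) \<and>
         (\<forall>P. is_suffix_array (fibword_bar m) P \<longrightarrow>
              arith_prog_perm (fiblen m) (fiblen (m - 2)) P \<and> P ! 0 = fiblen m)"
proof -
  let ?n = "fib m" and ?k = "fib (m - 2)" and ?P = "arith_prog_list (fib m) (fib (m - 2))"
  have k: "1 \<le> ?k" "?k < ?n" using fib_diff_two_bounds[OF assms(2)] by simp_all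
  have odd: "odd (m - 2)" and m: "m - 2 + 2 = m" using assms by presburger+
  have dvd: "?n dvd ?k * ?k + 1" using fib_dvd_square_plus_one[OF odd] unfolding m .
  have sa: "is_suffix_array (fibword_bar m) ?P"
    unfolding fibword_bar_eq_rotation_word[OF assms] by (rule rotation_word_suffix_array[OF k dvd])
  have ap: "arith_prog_perm ?n ?k ?P" by (rule arith_prog_list_arith_prog_perm[OF k dvd])
  have hd: "?P ! 0 = ?n" using k by (simp add: nth_arith_prog_list mod1_def)
  show ?thesis
  proof (intro conjI allI impI exI)
    show "is_suffix_array (fibword_bar m) ?P" by (rule sa)
    fix P assume "is_suffix_array (fibword_bar m) P"
    then have "P = ?P" using sa by (rule suffix_array_unique)
    then show "arith_prog_perm (fiblen m) (fiblen (m - 2)) P" "P ! 0 = fiblen m"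
      using ap hd by (simp_all add: fiblen_eq_fib)
  qed
qed

end
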